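(* Let $a,b\ge1$, $P=[a]\times[b]$, fix an integer $k$ with $1-a\le k\le b-1$, and let $B=\{(i,j)\in P\colon j-i=k\}$. Then $\sum_{p\in B}\mathbb{1}_p\equiv c$, where $c=a(b-k)/(a+b)$ if $k\ge0$ and $c=b(a+k)/(a+b)$ if $k<0$.
   Context: $[a]\times[b]=\{(i,j)\colon 1\le i\le a,\ 1\le j\le b\}$ with $(i,j)\le(i',j')$ iff $i\le i'$ and $j\le j'$. $\mathcal{J}(P)$ is the set of order ideals of $P$. For $x\in P$, $I\in\mathcal{J}(P)$: $\mathbb{1}_x(I)=1$ if $x\in I$, else $0$; $T_x^+(I)=1$ if $x$ is a minimal element of $P\setminus I$, else $0$; $T_x^-(I)=1$ if $x$ is a maximal element of $I$, else $0$; $T_x=T_x^+-T_x^-$. For statistics $f,g\colon\mathcal{J}(P)\to\mathbb{R}$, $f\equiv g$ means there exist real constants $c_x$ ($x\in P$) with $f-g=\sum_{x\in P}c_xT_x$; a real number $c$ denotes the constant function $c$. *)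

theory Defs
  imports Complex_Main
begin

definition order_ideals :: "'a set \<Rightarrow> ('a \<Rightarrow> 'a \<Rightarrow> bool) \<Rightarrow> 'a set set" where
  "order_ideals P le = {I. I \<subseteq> P \<and> (\<forall>x\<in>I. \<forall>y\<in>P. le y x \<longrightarrow> y \<in> I)}"

definition ind :: "'a \<Rightarrow> 'a set \<Rightarrow> real" where
  "ind x I = (if x \<in> I then 1 else 0)"

definition T_plus :: "'a set \<Rightarrow> ('a \<Rightarrow> 'a \<Rightarrow> bool) \<Rightarrow> 'a \<Rightarrow> 'a set \<Rightarrow> real" where
  "T_plus P le x I = (if x \<in> P - I \<and> (\<forall>y\<in>P - I. le y x \<longrightarrow> y = x) then 1 else 0)"

definition T_minus :: "'a set \<Rightarrow> ('a \<Rightarrow> 'a \<Rightarrow> bool) \<Rightarrow> 'a \<Rightarrow> 'a set \<Rightarrow> real" where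
  "T_minus P le x I = (if x \<in> I \<and> (\<forall>y\<in>I. le x y \<longrightarrow> y = x) then 1 else 0)"

definition toggle :: "'a set \<Rightarrow> ('a \<Rightarrow> 'a \<Rightarrow> bool) \<Rightarrow> 'a \<Rightarrow> 'a set \<Rightarrow> real" where
  "toggle P le x I = T_plus P le x I - T_minus P le x I"

definition stat_equiv :: "'a set \<Rightarrow> ('a \<Rightarrow> 'a \<Rightarrow> bool) \<Rightarrow> ('a set \<Rightarrow> real) \<Rightarrow> ('a set \<Rightarrow> real) \<Rightarrow> bool" where
  "stat_equiv P le f g \<longleftrightarrow>
     (\<exists>c :: 'a \<Rightarrow> real. \<forall>I \<in> order_ideals P le. f I - g I = (\<Sum>x\<in>P. c x * toggle P le x I))"

definition rect :: "nat \<Rightarrow> nat \<Rightarrow> (nat \<times> nat) set" where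
  "rect a b = {(i, j). 1 \<le> i \<and> i \<le> a \<and> 1 \<le> j \<and> j \<le> b}"

definition rect_le :: "nat \<times> nat \<Rightarrow> nat \<times> nat \<Rightarrow> bool" where
  "rect_le p q \<longleftrightarrow> fst p \<le> fst q \<and> snd p \<le> snd q"

end

theory Submission
  imports Defs "HOL-Library.Product_Order"
begin

(* Weight the toggleability statistic T_x of a cell x = (i, j) by g (j - i), a function of its
   diagonal. Adding a minimal element x of P - I to an order ideal I changes the weighted sum by
   the second difference g (d - 1) - 2 g d + g (d + 1) at d = j - i: T_x drops by 2, and on each
   neighbouring diagonal exactly one toggle rises by 1 (an upper cover of x becomes addable, or a
   lower cover stops being removable), except at the corners of the rectangle, where g is made to
   vanish. By induction over order ideals,
     sum_x g (j - i) T_x (I) = g 0 + sum of the second differences of g over the cells of I.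
   Taking for g the Green's function of the second difference on {-a..b} with pole k turns the
   right-hand side into g 0 plus the number of cells of I on the diagonal j - i = k, and
   -g 0 is the constant c of the theorem. *)

lemma order_ideals_subset: "I \<in> order_ideals P le \<Longrightarrow> I \<subseteq> P"
  by (simp add: order_ideals_def)

lemma order_ideals_downward:
  "I \<in> order_ideals P le \<Longrightarrow> x \<in> I \<Longrightarrow> y \<in> P \<Longrightarrow> le y x \<Longrightarrow> y \<in> I"
  by (simp add: order_ideals_def)

lemma order_ideal_induct [consumes 2, case_names empty insert]:
  fixes P :: "'a::order set"
  assumes "finite P" and "I \<in> order_ideals P (\<le>)"
    and empty: "Q {}"
    and insert: "\<And>I x. I \<in> order_ideals P (\<le>) \<Longrightarrow> x \<in> P - I \<Longrightarrow>
                   \<forall>z\<in>P - I. z \<le> x \<longrightarrow> z = x \<Longrightarrow> Q I \<Longrightarrow> Q (insert x I)"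
  shows "Q I"
  using assms(2)
proof (induction "card I" arbitrary: I)
  case 0
  then have "I = {}"
    using finite_subset[OF order_ideals_subset \<open>finite P\<close>] by simp
  then show ?case
    using empty by simp
next
  case (Suc n)
  have "finite I"
    using finite_subset[OF order_ideals_subset[OF Suc.prems] \<open>finite P\<close>] .
  moreover have "I \<noteq> {}"
    using Suc.hyps(2) by auto
  ultimately obtain x where x: "x \<in> I" and x_max: "\<forall>y\<in>I. x \<le> y \<longrightarrow> x = y"
    using finite_has_maximal by blast
  have ideal: "I - {x} \<in> order_ideals P (\<le>)"
    unfolding order_ideals_def
  proof (intro CollectI conjI ballI impI)
    show "I - {x} \<subseteq> P"
      using Suc.prems order_ideals_subset by blast
    fix z y assume "z \<in> I - {x}" "y \<in> P" "y \<le> z"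
    moreover from this have "y \<noteq> x"
      using x_max by auto
    ultimately show "y \<in> I - {x}"
      using order_ideals_downward[OF Suc.prems, of z y] by blast
  qed
  moreover have "x \<in> P - (I - {x})"
    using Suc.prems x order_ideals_subset by blast
  moreover have "\<forall>z\<in>P - (I - {x}). z \<le> x \<longrightarrow> z = x"
    using order_ideals_downward[OF Suc.prems x] by blast
  moreover have "Q (I - {x})"
    using Suc.hyps(1)[of "I - {x}"] Suc.hyps(2) \<open>finite I\<close> x ideal by simp
  ultimately have "Q (insert x (I - {x}))"
    by (rule insert)
  with x show ?case
    by (simp add: insert_absorb)
qed

lemma order_ideals_insert_minimal:
  assumes "I \<in> order_ideals P le" "x \<in> P" "\<forall>z\<in>P - I. le z x \<longrightarrow> z = x"
  shows "insert x I \<in> order_ideals P le"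
  using assms unfolding order_ideals_def by blast

lemma toggle_insert_minimal:
  fixes P :: "'a::order set"
  assumes I: "I \<in> order_ideals P (\<le>)" and x: "x \<in> P - I"
    and x_min: "\<forall>z\<in>P - I. z \<le> x \<longrightarrow> z = x"
  shows "toggle P (\<le>) y (insert x I) - toggle P (\<le>) y I =
           (if y = x then - 2 else 0)
         + (if x < y then T_plus P (\<le>) y (insert x I) else 0)
         + (if y < x then T_minus P (\<le>) y I else 0)"
proof -
  have below_in: "z \<in> I" if "z \<in> P" "z < x" for z
    using x_min that by (auto simp: less_le)
  have above_out: "z \<notin> I" if "x \<le> z" for z
    using order_ideals_downward[OF I, of z x] x that by blast
  consider "y = x" | "x < y" | "y < x" | "y \<noteq> x" "\<not> x < y" "\<not> y < x"
    by blast
  then show ?thesis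
  proof cases
    case 1
    then show ?thesis
      using x x_min above_out by (auto simp: toggle_def T_plus_def T_minus_def)
  next
    case 2
    then have "x \<le> y" "x \<noteq> y"
      by auto
    with 2 show ?thesis
      using x x_min above_out by (auto simp: toggle_def T_plus_def T_minus_def)
  next
    case 3
    then show ?thesis
      using x below_in by (auto simp: toggle_def T_plus_def T_minus_def)
  next
    case 4
    then show ?thesis
      using x by (auto simp: toggle_def T_plus_def T_minus_def less_le)
  qed
qed

lemma rect_le_eq_less_eq: "rect_le = (\<le>)"
  by (auto simp: fun_eq_iff rect_le_def less_eq_prod_def)

lemma rect_eq_product: "rect a b = {1..a} \<times> {1..b}"
  by (auto simp: rect_def)

lemma finite_rect [simp]: "finite (rect a b)"
  by (simp add: rect_eq_product)

lemma less_prod_nat_below: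
  fixes z :: "nat \<times> nat"
  shows "z < (p, q) \<Longrightarrow> z \<le> (p - 1, q) \<or> z \<le> (p, q - 1)"
  by (cases z) (auto simp: less_prod_def)

lemma less_prod_nat_above:
  fixes z :: "nat \<times> nat"
  shows "(p, q) < z \<Longrightarrow> (Suc p, q) \<le> z \<or> (p, Suc q) \<le> z"
  by (cases z) (auto simp: less_prod_def)

lemma T_plus_rect:
  assumes J: "J \<in> order_ideals (rect a b) (\<le>)"
  shows "T_plus (rect a b) (\<le>) (p, q) J =
           (if (p, q) \<in> rect a b - J \<and> (1 < p \<longrightarrow> (p - 1, q) \<in> J) \<and> (1 < q \<longrightarrow> (p, q - 1) \<in> J)
            then 1 else 0)"
proof -
  have "(\<forall>z\<in>rect a b - J. z \<le> (p, q) \<longrightarrow> z = (p, q)) \<longleftrightarrow>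
          (1 < p \<longrightarrow> (p - 1, q) \<in> J) \<and> (1 < q \<longrightarrow> (p, q - 1) \<in> J)"
    if pq: "(p, q) \<in> rect a b"
  proof
    assume minimal: "\<forall>z\<in>rect a b - J. z \<le> (p, q) \<longrightarrow> z = (p, q)"
    show "(1 < p \<longrightarrow> (p - 1, q) \<in> J) \<and> (1 < q \<longrightarrow> (p, q - 1) \<in> J)"
    proof (intro conjI impI)
      assume "1 < p"
      then have "(p - 1, q) \<in> rect a b" "(p - 1, q) \<le> (p, q)" "(p - 1, q) \<noteq> (p, q)"
        using pq by (auto simp: rect_def)
      then show "(p - 1, q) \<in> J"
        using minimal by blast
    next
      assume "1 < q"
      then have "(p, q - 1) \<in> rect a b" "(p, q - 1) \<le> (p, q)" "(p, q - 1) \<noteq> (p, q)"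
        using pq by (auto simp: rect_def)
      then show "(p, q - 1) \<in> J"
        using minimal by blast
    qed
  next
    assume lower: "(1 < p \<longrightarrow> (p - 1, q) \<in> J) \<and> (1 < q \<longrightarrow> (p, q - 1) \<in> J)"
    show "\<forall>z\<in>rect a b - J. z \<le> (p, q) \<longrightarrow> z = (p, q)"
    proof (intro ballI impI, rule ccontr)
      fix z assume z: "z \<in> rect a b - J" "z \<le> (p, q)" "z \<noteq> (p, q)"
      then have "z \<le> (p - 1, q) \<or> z \<le> (p, q - 1)"
        by (intro less_prod_nat_below) simp
      moreover have "1 \<le> fst z" "1 \<le> snd z"
        using z by (auto simp: rect_def)
      ultimately have "z \<le> (p - 1, q) \<and> (p - 1, q) \<in> J \<or> z \<le> (p, q - 1) \<and> (p, q - 1) \<in> J"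
        using lower by (auto simp: less_eq_prod_def)
      then show False
        using z order_ideals_downward[OF J, of _ z] by blast
    qed
  qed
  then show ?thesis
    by (auto simp: T_plus_def)
qed

lemma T_minus_rect:
  assumes J: "J \<in> order_ideals (rect a b) (\<le>)"
  shows "T_minus (rect a b) (\<le>) (p, q) J =
           (if (p, q) \<in> J \<and> (Suc p, q) \<notin> J \<and> (p, Suc q) \<notin> J then 1 else 0)"
proof -
  have "(\<forall>z\<in>J. (p, q) \<le> z \<longrightarrow> z = (p, q)) \<longleftrightarrow> (Suc p, q) \<notin> J \<and> (p, Suc q) \<notin> J"
    if pq: "(p, q) \<in> J"
  proof
    assume "\<forall>z\<in>J. (p, q) \<le> z \<longrightarrow> z = (p, q)"
    then show "(Suc p, q) \<notin> J \<and> (p, Suc q) \<notin> J"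
      by auto
  next
    assume upper: "(Suc p, q) \<notin> J \<and> (p, Suc q) \<notin> J"
    show "\<forall>z\<in>J. (p, q) \<le> z \<longrightarrow> z = (p, q)"
    proof (intro ballI impI, rule ccontr)
      fix z assume z: "z \<in> J" "(p, q) \<le> z" "z \<noteq> (p, q)"
      then have "(p, q) < z"
        by simp
      then obtain n where n: "n \<in> {(Suc p, q), (p, Suc q)}" "n \<le> z"
        using less_prod_nat_above[of p q z] by auto
      moreover have "n \<in> rect a b"
        using n z pq order_ideals_subset[OF J] by (auto simp: rect_def)
      ultimately show False
        using upper order_ideals_downward[OF J z(1), of n] by auto
    qed
  qed
  then show ?thesis
    by (auto simp: T_minus_def)
qed

lemma sum_if_mem_eq_sum:
  assumes "finite A" "finite N" "\<And>y. y \<in> N - A \<Longrightarrow> h y = 0"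
  shows "(\<Sum>y\<in>A. if y \<in> N then h y else 0) = sum h N"
proof -
  have "(\<Sum>y\<in>A. if y \<in> N then h y else 0) = sum h (A \<inter> N)"
    by (simp add: sum.inter_restrict[OF assms(1)])
  also have "\<dots> = sum h N"
    using assms by (intro sum.mono_neutral_left) auto
  finally show ?thesis .
qed

definition content :: "nat \<times> nat \<Rightarrow> int" where
  "content x = int (snd x) - int (fst x)"

context
  fixes a b i j :: nat and I :: "(nat \<times> nat) set"
  assumes I: "I \<in> order_ideals (rect a b) (\<le>)"
    and x: "(i, j) \<in> rect a b - I"
    and x_min: "\<forall>z\<in>rect a b - I. z \<le> (i, j) \<longrightarrow> z = (i, j)"
begin

lemma minimal_bounds: "1 \<le> i" "i \<le> a" "1 \<le> j" "j \<le> b"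
  using x by (auto simp: rect_def)

lemma above_minimal_notin: "(i, j) \<le> z \<Longrightarrow> z \<notin> I"
  using order_ideals_downward[OF I, of z "(i, j)"] x by blast

lemma below_minimal_in: "z \<in> rect a b \<Longrightarrow> z < (i, j) \<Longrightarrow> z \<in> I"
  using x_min by (auto simp: less_le)

lemma lower_neighbours_minimal_in: "1 < i \<Longrightarrow> (i - 1, j) \<in> I" "1 < j \<Longrightarrow> (i, j - 1) \<in> I"
  using minimal_bounds by (auto simp: rect_def less_le intro!: below_minimal_in)

lemma insert_minimal_ideal: "insert (i, j) I \<in> order_ideals (rect a b) (\<le>)"
  using order_ideals_insert_minimal[OF I _ x_min] x by blast

lemma T_plus_above_minimal:
  assumes "(i, j) < y" "T_plus (rect a b) (\<le>) y (insert (i, j) I) \<noteq> 0"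
  shows "y \<in> {(Suc i, j), (i, Suc j)}"
proof (cases y)
  case (Pair p q)
  have lower: "(p, q) \<in> rect a b" "1 < p \<longrightarrow> (p - 1, q) \<in> insert (i, j) I"
      "1 < q \<longrightarrow> (p, q - 1) \<in> insert (i, j) I"
    using assms(2) unfolding Pair T_plus_rect[OF insert_minimal_ideal] by (auto split: if_splits)
  have "i \<le> p" "j \<le> q" "(i, j) \<noteq> (p, q)"
    using assms(1) Pair by (auto simp: less_le)
  then consider "i < p" "j \<le> q" | "i = p" "j < q"
    by (cases "i < p") auto
  then show ?thesis
  proof cases
    case 1
    then have "(p - 1, q) \<in> insert (i, j) I" "(i, j) \<le> (p - 1, q)"
      using lower minimal_bounds by auto
    then have "(p - 1, q) = (i, j)"
      using above_minimal_notin by blast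
    with 1 show ?thesis
      using Pair by auto
  next
    case 2
    then have "(p, q - 1) \<in> insert (i, j) I" "(i, j) \<le> (p, q - 1)"
      using lower minimal_bounds by auto
    then have "(p, q - 1) = (i, j)"
      using above_minimal_notin by blast
    with 2 show ?thesis
      using Pair by auto
  qed
qed

lemma T_minus_below_minimal:
  assumes "y < (i, j)" "T_minus (rect a b) (\<le>) y I \<noteq> 0"
  shows "y \<in> {(i - 1, j), (i, j - 1)}"
proof (cases y)
  case (Pair p q)
  have upper: "(p, q) \<in> I" "(Suc p, q) \<notin> I" "(p, Suc q) \<notin> I"
    using assms(2) unfolding Pair T_minus_rect[OF I] by (auto split: if_splits)
  have "(Suc p, q) \<le> (i, j) \<or> (p, Suc q) \<le> (i, j)"
    using less_prod_nat_above[of p q "(i, j)"] assms(1) Pair by blast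
  then obtain n where n: "n \<in> {(Suc p, q), (p, Suc q)}" "n \<le> (i, j)"
    by blast
  have "n \<in> rect a b"
    using n upper(1) x order_ideals_subset[OF I] by (auto simp: rect_def)
  then have "n = (i, j)"
    using n upper below_minimal_in[of n] by (auto simp: less_le)
  with n show ?thesis
    using Pair by auto
qed

lemma toggle_insert_minimal_rect:
  "toggle (rect a b) (\<le>) y (insert (i, j) I) - toggle (rect a b) (\<le>) y I =
     (if y = (i, j) then - 2 else 0)
   + (if y \<in> {(Suc i, j), (i, Suc j)} then T_plus (rect a b) (\<le>) y (insert (i, j) I) else 0)
   + (if y \<in> {(i - 1, j), (i, j - 1)} then T_minus (rect a b) (\<le>) y I else 0)"
proof -
  have "(if (i, j) < y then T_plus (rect a b) (\<le>) y (insert (i, j) I) else 0) =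
        (if y \<in> {(Suc i, j), (i, Suc j)} then T_plus (rect a b) (\<le>) y (insert (i, j) I) else 0)"
    "(if y < (i, j) then T_minus (rect a b) (\<le>) y I else 0) =
        (if y \<in> {(i - 1, j), (i, j - 1)} then T_minus (rect a b) (\<le>) y I else 0)"
    using T_plus_above_minimal[of y] T_minus_below_minimal[of y] minimal_bounds
    by (auto simp: less_prod_def)
  then show ?thesis
    using toggle_insert_minimal[OF I x x_min, of y] by simp
qed

(* The cell (i - 1, j + 1) decides which of the two toggles occurs. *)
lemma T_plus_T_minus_next_diagonal:
  "T_plus (rect a b) (\<le>) (i, Suc j) (insert (i, j) I) + T_minus (rect a b) (\<le>) (i - 1, j) I =
     (if i = 1 \<and> j = b then 0 else 1)"
proof -
  have "(i, Suc j) \<notin> I"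
    using above_minimal_notin by simp
  moreover have "(i - 1, j) \<in> I \<longleftrightarrow> 1 < i"
    using lower_neighbours_minimal_in(1) order_ideals_subset[OF I] by (auto simp: rect_def)
  moreover have "(i - 1, Suc j) \<in> I \<Longrightarrow> 1 < i \<and> j < b"
    using order_ideals_subset[OF I] minimal_bounds by (auto simp: rect_def)
  ultimately show ?thesis
    unfolding T_plus_rect[OF insert_minimal_ideal] T_minus_rect[OF I]
    using x minimal_bounds by (cases "(i - 1, Suc j) \<in> I") (auto simp: rect_def)
qed

lemma T_plus_T_minus_prev_diagonal:
  "T_plus (rect a b) (\<le>) (Suc i, j) (insert (i, j) I) + T_minus (rect a b) (\<le>) (i, j - 1) I =
     (if i = a \<and> j = 1 then 0 else 1)"
proof -
  have "(Suc i, j) \<notin> I"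
    using above_minimal_notin by simp
  moreover have "(i, j - 1) \<in> I \<longleftrightarrow> 1 < j"
    using lower_neighbours_minimal_in(2) order_ideals_subset[OF I] by (auto simp: rect_def)
  moreover have "(Suc i, j - 1) \<in> I \<Longrightarrow> i < a \<and> 1 < j"
    using order_ideals_subset[OF I] minimal_bounds by (auto simp: rect_def)
  ultimately show ?thesis
    unfolding T_plus_rect[OF insert_minimal_ideal] T_minus_rect[OF I]
    using x minimal_bounds by (cases "(Suc i, j - 1) \<in> I") (auto simp: rect_def)
qed

lemma weighted_toggle_difference:
  fixes g :: "int \<Rightarrow> real"
  defines "d \<equiv> content (i, j)"
  shows "(\<Sum>y\<in>rect a b. g (content y) *
            (toggle (rect a b) (\<le>) y (insert (i, j) I) - toggle (rect a b) (\<le>) y I))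
       = - 2 * g d
         + g (d - 1) * (T_plus (rect a b) (\<le>) (Suc i, j) (insert (i, j) I)
                        + T_minus (rect a b) (\<le>) (i, j - 1) I)
         + g (d + 1) * (T_plus (rect a b) (\<le>) (i, Suc j) (insert (i, j) I)
                        + T_minus (rect a b) (\<le>) (i - 1, j) I)"
proof -
  let ?R = "rect a b"
  let ?Tp = "\<lambda>y. T_plus ?R (\<le>) y (insert (i, j) I)" and ?Tm = "\<lambda>y. T_minus ?R (\<le>) y I"
  let ?up = "{(Suc i, j), (i, Suc j)}" and ?down = "{(i - 1, j), (i, j - 1)}"
  have "(\<Sum>y\<in>?R. g (content y) * (toggle ?R (\<le>) y (insert (i, j) I) - toggle ?R (\<le>) y I))
      = (\<Sum>y\<in>?R. (if y = (i, j) then - 2 * g d else 0)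
          + (if y \<in> ?up then g (content y) * ?Tp y else 0)
          + (if y \<in> ?down then g (content y) * ?Tm y else 0))"
    by (rule sum.cong) (simp_all add: toggle_insert_minimal_rect distrib_left d_def)
  also have "\<dots> = - 2 * g d + (\<Sum>y\<in>?up. g (content y) * ?Tp y) + (\<Sum>y\<in>?down. g (content y) * ?Tm y)"
  proof -
    have "(\<Sum>y\<in>?R. if y \<in> ?up then g (content y) * ?Tp y else 0) = (\<Sum>y\<in>?up. g (content y) * ?Tp y)"
      by (rule sum_if_mem_eq_sum) (simp_all add: T_plus_def)
    moreover have "(\<Sum>y\<in>?R. if y \<in> ?down then g (content y) * ?Tm y else 0)
        = (\<Sum>y\<in>?down. g (content y) * ?Tm y)"
      using order_ideals_subset[OF I] by (intro sum_if_mem_eq_sum) (auto simp: T_minus_def)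
    ultimately show ?thesis
      unfolding sum.distrib using x by simp
  qed
  also have "\<dots> = - 2 * g d + g (d - 1) * (?Tp (Suc i, j) + ?Tm (i, j - 1))
      + g (d + 1) * (?Tp (i, Suc j) + ?Tm (i - 1, j))"
    using minimal_bounds by (simp add: d_def content_def of_nat_diff algebra_simps)
  finally show ?thesis .
qed

lemma weighted_toggle_sum_insert_minimal:
  fixes g :: "int \<Rightarrow> real"
  assumes "g (- int a) = 0" "g (int b) = 0"
  defines "d \<equiv> content (i, j)"
  shows "(\<Sum>y\<in>rect a b. g (content y) * toggle (rect a b) (\<le>) y (insert (i, j) I))
       = (\<Sum>y\<in>rect a b. g (content y) * toggle (rect a b) (\<le>) y I) + (g (d - 1) - 2 * g d + g (d + 1))"
proof -
  have prev_diagonal: "g (d - 1) * (T_plus (rect a b) (\<le>) (Suc i, j) (insert (i, j) I)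
                                  + T_minus (rect a b) (\<le>) (i, j - 1) I) = g (d - 1)"
    using T_plus_T_minus_prev_diagonal assms(1)
    by (cases "i = a \<and> j = 1") (simp_all add: d_def content_def)
  have next_diagonal: "g (d + 1) * (T_plus (rect a b) (\<le>) (i, Suc j) (insert (i, j) I)
                                  + T_minus (rect a b) (\<le>) (i - 1, j) I) = g (d + 1)"
    using T_plus_T_minus_next_diagonal assms(2)
    by (cases "i = 1 \<and> j = b") (simp_all add: d_def content_def)
  have "(\<Sum>y\<in>rect a b. g (content y) * toggle (rect a b) (\<le>) y (insert (i, j) I))
      - (\<Sum>y\<in>rect a b. g (content y) * toggle (rect a b) (\<le>) y I) = g (d - 1) - 2 * g d + g (d + 1)"
    using weighted_toggle_difference[of g]
    unfolding prev_diagonal next_diagonal d_def[symmetric]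
    by (simp add: sum_subtractf[symmetric] right_diff_distrib)
  then show ?thesis
    by simp
qed

end

lemma weighted_toggle_sum_empty:
  fixes g :: "int \<Rightarrow> real"
  assumes "g (- int a) = 0" "g (int b) = 0"
  shows "(\<Sum>y\<in>rect a b. g (content y) * toggle (rect a b) (\<le>) y {}) = g 0"
proof -
  have empty: "{} \<in> order_ideals (rect a b) (\<le>)"
    by (simp add: order_ideals_def)
  have "toggle (rect a b) (\<le>) (p, q) {} = (if (p, q) = (1, 1) then 1 else 0)"
    if "(p, q) \<in> rect a b" for p q
    using that unfolding toggle_def T_minus_def T_plus_rect[OF empty] by (auto simp: rect_def)
  then have "(\<Sum>y\<in>rect a b. g (content y) * toggle (rect a b) (\<le>) y {})
      = (\<Sum>y\<in>rect a b. if y = (1, 1) then g (content y) else 0)"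
    by (intro sum.cong) force+
  also have "\<dots> = g 0"
    using assms by (simp add: content_def) (auto simp: rect_def Suc_le_eq)
  finally show ?thesis .
qed

theorem weighted_toggle_sum_rect:
  fixes g :: "int \<Rightarrow> real"
  assumes "g (- int a) = 0" "g (int b) = 0" and "I \<in> order_ideals (rect a b) (\<le>)"
  shows "(\<Sum>y\<in>rect a b. g (content y) * toggle (rect a b) (\<le>) y I)
         = g 0 + (\<Sum>x\<in>I. g (content x - 1) - 2 * g (content x) + g (content x + 1))"
  using finite_rect assms(3)
proof (induction I rule: order_ideal_induct)
  case empty
  show ?case
    using weighted_toggle_sum_empty[OF assms(1,2)] by simp
next
  case (insert I x)
  obtain i j where x: "x = (i, j)"
    by fastforce
  have "finite I"
    using finite_subset[OF order_ideals_subset[OF insert.hyps(1)] finite_rect] .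
  with insert x show ?case
    using weighted_toggle_sum_insert_minimal[OF insert.hyps(1) _ _ assms(1,2)] by simp
qed

(* -(a + b) times the Green's function of the second difference on {-a..b} with pole k. *)
definition tent :: "nat \<Rightarrow> nat \<Rightarrow> int \<Rightarrow> int \<Rightarrow> int" where
  "tent a b k d = (min d k + int a) * (int b - max d k)"

lemma tent_second_difference:
  "tent a b k (d - 1) - 2 * tent a b k d + tent a b k (d + 1) = (if d = k then - int (a + b) else 0)"
proof -
  consider "d < k" | "d = k" | "k < d"
    by linarith
  then show ?thesis
  proof cases
    case 1
    then have "min (d - 1) k = d - 1" "min d k = d" "min (d + 1) k = d + 1"
      "max (d - 1) k = k" "max d k = k" "max (d + 1) k = k"
      by auto
    with 1 show ?thesis
      by (simp add: tent_def algebra_simps)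
  next
    case 2
    then have "min (d - 1) k = d - 1" "min d k = k" "min (d + 1) k = k"
      "max (d - 1) k = k" "max d k = k" "max (d + 1) k = d + 1"
      by auto
    with 2 show ?thesis
      by (simp add: tent_def algebra_simps)
  next
    case 3
    then have "min (d - 1) k = k" "min d k = k" "min (d + 1) k = k"
      "max (d - 1) k = d - 1" "max d k = d" "max (d + 1) k = d + 1"
      by auto
    with 3 show ?thesis
      by (simp add: tent_def algebra_simps)
  qed
qed

definition green :: "nat \<Rightarrow> nat \<Rightarrow> int \<Rightarrow> int \<Rightarrow> real" where
  "green a b k d = - of_int (tent a b k d) / (real a + real b)"

lemma green_second_difference:
  assumes "0 < a + b"
  shows "green a b k (d - 1) - 2 * green a b k d + green a b k (d + 1) = (if d = k then 1 else 0)"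
proof -
  have ab: "real a + real b \<noteq> 0"
    using assms by (simp flip: of_nat_add)
  have "green a b k (d - 1) - 2 * green a b k d + green a b k (d + 1)
      = - of_int (tent a b k (d - 1) - 2 * tent a b k d + tent a b k (d + 1)) / (real a + real b)"
    by (simp add: green_def add_divide_distrib diff_divide_distrib)
  also have "\<dots> = (if d = k then 1 else 0)"
    unfolding tent_second_difference using ab by (simp add: field_simps)
  finally show ?thesis .
qed

lemma sum_ind_diagonal:
  assumes "I \<subseteq> rect a b"
  shows "(\<Sum>p\<in>{(i, j) \<in> rect a b. int j - int i = k}. ind p I) = (\<Sum>x\<in>I. if content x = k then 1 else 0)"
proof -
  let ?B = "{(i, j) \<in> rect a b. int j - int i = k}"
  have "finite ?B"
    by (rule finite_subset[OF _ finite_rect]) auto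
  then have "(\<Sum>p\<in>?B. ind p I) = (\<Sum>p\<in>?B \<inter> I. 1)"
    by (simp only: ind_def sum.inter_restrict)
  also have "\<dots> = real (card (?B \<inter> I))"
    by simp
  also have "?B \<inter> I = {x \<in> I. content x = k}"
    using assms by (auto simp: content_def)
  also have "real (card {x \<in> I. content x = k}) = (\<Sum>x\<in>I. if content x = k then 1 else 0)"
    using finite_subset[OF assms finite_rect] by (simp add: sum.inter_filter[symmetric])
  finally show ?thesis .
qed

theorem theorem3p10:
  fixes a b :: nat and k :: int
  assumes "1 \<le> a" and "1 \<le> b" and "1 - int a \<le> k" and "k \<le> int b - 1"
  shows "stat_equiv (rect a b) rect_le
           (\<lambda>I. \<Sum>p\<in>{(i, j) \<in> rect a b. int j - int i = k}. ind p I)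
           (\<lambda>I. if k \<ge> 0 then real a * (real b - of_int k) / (real a + real b)
                else real b * (real a + of_int k) / (real a + real b))"
  unfolding stat_equiv_def rect_le_eq_less_eq
proof (intro exI ballI)
  let ?g = "green a b k"
  fix I assume I: "I \<in> order_ideals (rect a b) (\<le>)"
  have boundary: "?g (- int a) = 0" "?g (int b) = 0"
    using assms by (simp_all add: green_def tent_def)
  have at_zero: "?g 0 = - (if k \<ge> 0 then real a * (real b - of_int k) / (real a + real b)
                           else real b * (real a + of_int k) / (real a + real b))"
    by (cases "0 \<le> k") (simp_all add: green_def tent_def)
  have "(\<Sum>y\<in>rect a b. ?g (content y) * toggle (rect a b) (\<le>) y I)
      = ?g 0 + (\<Sum>x\<in>I. if content x = k then 1 else 0)"
    using weighted_toggle_sum_rect[OF boundary I] green_second_difference assms by simp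
  also have "\<dots> = ?g 0 + (\<Sum>p\<in>{(i, j) \<in> rect a b. int j - int i = k}. ind p I)"
    using sum_ind_diagonal[OF order_ideals_subset[OF I]] by simp
  finally show "(\<Sum>p\<in>{(i, j) \<in> rect a b. int j - int i = k}. ind p I)
      - (if k \<ge> 0 then real a * (real b - of_int k) / (real a + real b)
         else real b * (real a + of_int k) / (real a + real b))
      = (\<Sum>y\<in>rect a b. ?g (content y) * toggle (rect a b) (\<le>) y I)"
    unfolding at_zero by simp
qed

end
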